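(* Let $f\in L_1([-\pi,\pi])$ have Fourier series $\sum_{k\in\mathbb Z}a_ke^{ikx}$, and for $N\in\mathbb N$ let $S_N(f)(x)=\sum_{m=-2^N}^{2^N}a_me^{imx}$. Then for every $1<p<\infty$ and every $N\in\mathbb N$, $$I_p(S_N(f))\le 2^{1/p'}I_p(f).$$
   Context: $p'=p/(p-1)$. For a function $g\in L_1([-\pi,\pi])$ with Fourier coefficients $\{c_k\}_{k\in\mathbb Z}$ (where $c_k=\frac1{2\pi}\int_{-\pi}^\pi g(x)e^{-ikx}dx$; for a trigonometric polynomial these are its coefficients), put $|\Delta c_k|=|c_k-c_{k+1}|$ for $k>0$, $|\Delta c_k|=|c_k-c_{k-1}|$ for $k<0$, $|\Delta c_0|=|c_0-c_1|+|c_0-c_{-1}|$; let $\Theta_k(g)=\sum_{[2^{k-1}]\le|m|<2^k}|\Delta c_m|$ for $k\ge0$ ($[\cdot]$ the floor function), and $I_p(g)=\big(\sum_{k=0}^\infty(2^{k/p'}\Theta_k(g))^p\big)^{1/p}$ (possibly $+\infty$). *)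

theory Defs
  imports "HOL-Analysis.Analysis"
begin

definition fourier_coeff :: "(real \<Rightarrow> complex) \<Rightarrow> int \<Rightarrow> complex" where
  "fourier_coeff g k =
     complex_of_real (1 / (2 * pi)) *
     set_lebesgue_integral lborel {-pi..pi}
       (\<lambda>x. g x * exp (- (\<i> * of_int k * complex_of_real x)))"

definition delta_abs :: "(int \<Rightarrow> complex) \<Rightarrow> int \<Rightarrow> real" where
  "delta_abs c k =
     (if k > 0 then cmod (c k - c (k + 1))
      else if k < 0 then cmod (c k - c (k - 1))
      else cmod (c 0 - c 1) + cmod (c 0 - c (-1)))"

definition Theta :: "(int \<Rightarrow> complex) \<Rightarrow> nat \<Rightarrow> real" where
  "Theta c k = (\<Sum>m\<in>{m::int. \<lfloor>(2::real) powr (real k - 1)\<rfloor> \<le> \<bar>m\<bar> \<and> \<bar>m\<bar> < 2 ^ k}.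
                  delta_abs c m)"

definition conj_exp :: "real \<Rightarrow> real" where
  "conj_exp p = p / (p - 1)"

definition Ip_seq :: "real \<Rightarrow> (int \<Rightarrow> complex) \<Rightarrow> ereal" where
  "Ip_seq p c =
     (let t = (\<lambda>k::nat. (2 powr (real k / conj_exp p) * Theta c k) powr p)
      in if summable t then ereal ((\<Sum>k. t k) powr (1 / p)) else \<infinity>)"

definition Ip :: "real \<Rightarrow> (real \<Rightarrow> complex) \<Rightarrow> ereal" where
  "Ip p g = Ip_seq p (fourier_coeff g)"

definition S_N :: "nat \<Rightarrow> (real \<Rightarrow> complex) \<Rightarrow> real \<Rightarrow> complex" where
  "S_N N f x = (\<Sum>m\<in>{-(2 ^ N)..(2 ^ N)::int}.
                  fourier_coeff f m * exp (\<i> * of_int m * complex_of_real x))"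

end

theory Submission
  imports Defs
begin

text \<open>Write \<open>a\<^sub>k\<close> for the Fourier coefficients of \<open>f\<close>. Truncating at \<open>2^N\<close> leaves \<open>\<Theta>\<^sub>k\<close> unchanged
  for \<open>k \<le> N\<close>, kills it for \<open>k > N + 1\<close>, and turns \<open>\<Theta>\<^sub>N\<^sub>+\<^sub>1\<close> into \<open>|a(2^N)| + |a(-2^N)|\<close>. Telescoping
  from \<open>2^N\<close> to each index of the block \<open>[2^K, 2^(K+1))\<close> and averaging over the block bounds
  \<open>|a(2^N)|\<close> by \<open>\<Theta>\<^sub>N\<^sub>+\<^sub>1 + \<dots> + \<Theta>\<^sub>K\<^sub>+\<^sub>1\<close> plus the block average of the coefficients, and that average
  tends to \<open>0\<close> because \<open>f\<close> is integrable. Convexity of \<open>t \<mapsto> t^p\<close> bounds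
  \<open>2^((N+1)(p-1)) (\<Theta>\<^sub>N\<^sub>+\<^sub>1 + \<Theta>\<^sub>N\<^sub>+\<^sub>2 + \<dots>)^p\<close> by \<open>2^(p-1)\<close> times the tail \<open>\<Sum>\<^sub>k\<^sub>>\<^sub>N (2^(k/p') \<Theta>\<^sub>k)^p\<close>,
  and the factor \<open>2^(p-1) \<ge> 1\<close> also absorbs the untouched head.\<close>

section \<open>Fourier coefficients\<close>

lemma set_integral_exp_int_mult:
  fixes n :: int
  shows "(LINT x:{-pi..pi}|lborel. exp (\<i> * of_int n * complex_of_real x))
         = (if n = 0 then complex_of_real (2 * pi) else 0)"
proof (cases "n = 0")
  case True
  then show ?thesis
    by (simp add: set_lebesgue_integral_def scaleR_conv_of_real)
next
  case False
  define a where "a = \<i> * complex_of_int n"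
  have a0: "a \<noteq> 0" using False by (simp add: a_def)
  let ?F = "\<lambda>x::real. exp (a * complex_of_real x) / a"
  have "(LINT x:{-pi..pi}|lborel. exp (a * complex_of_real x)) = ?F pi - ?F (-pi)"
    unfolding set_lebesgue_integral_def
  proof (rule integral_FTC_atLeastAtMost)
    show "continuous_on {- pi..pi} (\<lambda>x. exp (a * complex_of_real x))"
      by (intro continuous_intros)
    fix x :: real
    show "(?F has_vector_derivative exp (a * complex_of_real x)) (at x within {- pi..pi})"
      using a0
      by (intro derivative_eq_intros has_complex_derivative_imp_has_vector_derivative [unfolded o_def] | simp)+
  qed simp
  also have "?F pi = ?F (-pi)"
  proof -
    have "a * complex_of_real pi = a * complex_of_real (-pi) + (2 * of_int n * pi) * \<i>"
      by (simp add: a_def algebra_simps)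
    then have "exp (a * complex_of_real pi) = exp (a * complex_of_real (-pi)) * exp ((2 * of_int n * pi) * \<i>)"
      by (simp only: exp_add)
    also have "exp ((2 * of_int n * pi) * \<i>) = 1"
      by (rule exp_integer_2pi) simp
    finally show ?thesis by simp
  qed
  finally show ?thesis using False by (simp add: a_def)
qed

lemma set_integral_sum:
  fixes f :: "'i \<Rightarrow> 'a \<Rightarrow> 'b::{banach, second_countable_topology}"
  assumes "\<And>i. i \<in> I \<Longrightarrow> set_integrable M A (f i)"
  shows "(LINT x:A|M. (\<Sum>i\<in>I. f i x)) = (\<Sum>i\<in>I. LINT x:A|M. f i x)"
  unfolding set_lebesgue_integral_def scaleR_sum_right
  by (intro Bochner_Integration.integral_sum) (use assms in \<open>auto simp: set_integrable_def\<close>)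

definition coeff_trunc :: "int \<Rightarrow> (int \<Rightarrow> 'a::zero) \<Rightarrow> int \<Rightarrow> 'a" where
  "coeff_trunc P c k = (if \<bar>k\<bar> \<le> P then c k else 0)"

lemma fourier_coeff_S_N: "fourier_coeff (S_N N f) = coeff_trunc (2 ^ N) (fourier_coeff f)"
proof
  fix k
  define c where "c = fourier_coeff f"
  let ?I = "{-(2 ^ N)..(2 ^ N)::int}"
  have eq: "S_N N f x * exp (- (\<i> * of_int k * complex_of_real x)) =
      (\<Sum>m\<in>?I. c m * exp (\<i> * of_int (m - k) * complex_of_real x))" for x
    unfolding S_N_def c_def sum_distrib_right
    by (rule sum.cong) (auto simp: mult.assoc exp_add[symmetric] algebra_simps)
  have "(LINT x:{-pi..pi}|lborel. S_N N f x * exp (- (\<i> * of_int k * complex_of_real x)))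
     = (\<Sum>m\<in>?I. c m * (LINT x:{-pi..pi}|lborel. exp (\<i> * of_int (m - k) * complex_of_real x)))"
    unfolding eq
    by (subst set_integral_sum) (auto intro!: borel_integrable_atLeastAtMost' continuous_intros)
  also have "\<dots> = (\<Sum>m\<in>?I. if m = k then c m * complex_of_real (2 * pi) else 0)"
    by (rule sum.cong[OF refl], subst set_integral_exp_int_mult, simp)
  also have "\<dots> = (if k \<in> ?I then c k * complex_of_real (2 * pi) else 0)"
    by (subst sum.delta) auto
  finally show "fourier_coeff (S_N N f) k = coeff_trunc (2 ^ N) (fourier_coeff f) k"
    unfolding fourier_coeff_def[of "S_N N f"] c_def[symmetric] coeff_trunc_def
    by (auto simp: abs_le_iff)
qed

definition dyadic_average :: "(nat \<Rightarrow> 'a::real_normed_field) \<Rightarrow> nat \<Rightarrow> 'a" where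
  "dyadic_average c K = (\<Sum>j<2 ^ K. c (2 ^ K + j)) / of_nat (2 ^ K)"

lemma norm_dyadic_average_le:
  assumes "\<And>i. norm (c i) \<le> B"
  shows "norm (dyadic_average c K) \<le> B"
proof -
  have "norm (\<Sum>j<2 ^ K. c (2 ^ K + j)) \<le> (\<Sum>j<(2::nat) ^ K. B)"
    by (rule order_trans[OF norm_sum sum_mono]) (rule assms)
  then show ?thesis
    by (simp add: dyadic_average_def norm_divide norm_power divide_le_eq mult.commute)
qed

lemma dyadic_average_power_tendsto_zero:
  fixes z :: "'a::real_normed_field"
  assumes z: "norm z = 1" "z \<noteq> 1"
  shows "dyadic_average (\<lambda>i. z ^ i) \<longlonglongrightarrow> 0"
proof (rule Lim_null_comparison)
  define C where "C = 2 / norm (1 - z)"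
  show "\<forall>\<^sub>F K in sequentially. norm (dyadic_average (\<lambda>i. z ^ i) K) \<le> C * (1 / 2) ^ K"
  proof (intro always_eventually allI)
    fix K :: nat
    let ?M = "(2::nat) ^ K"
    have "(\<Sum>j<?M. z ^ (?M + j)) = z ^ ?M * ((1 - z ^ ?M) / (1 - z))"
      using z by (simp add: power_add sum_distrib_left[symmetric] sum_gp_strict)
    moreover have "norm (1 - z ^ ?M) \<le> 2"
      using norm_triangle_ineq4[of 1 "z ^ ?M"] by (simp add: norm_power z)
    ultimately have "norm (\<Sum>j<?M. z ^ (?M + j)) \<le> C"
      using z by (simp add: norm_mult norm_power norm_divide C_def divide_right_mono)
    then show "norm (dyadic_average (\<lambda>i. z ^ i) K) \<le> C * (1 / 2) ^ K"
      by (simp add: dyadic_average_def norm_divide norm_power power_one_over divide_right_mono)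
  qed
  show "(\<lambda>K. C * (1 / 2 :: real) ^ K) \<longlonglongrightarrow> 0"
    by (intro tendsto_mult_right_zero LIMSEQ_power_zero) simp
qed

lemma set_integrable_mult_bounded:
  fixes f g :: "'a \<Rightarrow> 'b::{real_normed_field, banach, second_countable_topology}"
  assumes f: "set_integrable M A f" and g: "g \<in> borel_measurable M"
    and g_le: "\<And>x. norm (g x) \<le> 1"
  shows "set_integrable M A (\<lambda>x. f x * g x)"
  unfolding set_integrable_def
proof (rule Bochner_Integration.integrable_bound[where f="\<lambda>x. indicator A x *\<^sub>R f x"])
  show "integrable M (\<lambda>x. indicator A x *\<^sub>R f x)"
    using f unfolding set_integrable_def .
  have "(\<lambda>x. (indicator A x *\<^sub>R f x) * g x) \<in> borel_measurable M"
    using borel_measurable_integrable[OF f[unfolded set_integrable_def]] g by measurable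
  then show "(\<lambda>x. indicator A x *\<^sub>R (f x * g x)) \<in> borel_measurable M"
    by (simp add: mult.assoc)
  show "AE x in M. norm (indicator A x *\<^sub>R (f x * g x)) \<le> norm (indicator A x *\<^sub>R f x)"
    using g_le by (auto simp: norm_mult indicator_def intro!: mult_left_le)
qed

lemma set_integral_mult_bounded_tendsto_zero:
  fixes f :: "'a \<Rightarrow> 'b::{real_normed_field, banach, second_countable_topology}"
  assumes f: "set_integrable M A f" and g_meas: "\<And>K. g K \<in> borel_measurable M"
    and g_le: "\<And>K x. norm (g K x) \<le> 1"
    and g_lim: "AE x in M. x \<in> A \<longrightarrow> (\<lambda>K. g K x) \<longlonglongrightarrow> 0"
  shows "(\<lambda>K. LINT x:A|M. f x * g K x) \<longlonglongrightarrow> 0"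
proof -
  have "(\<lambda>K. integral\<^sup>L M (\<lambda>x. indicator A x *\<^sub>R (f x * g K x))) \<longlonglongrightarrow> integral\<^sup>L M (\<lambda>x. 0)"
  proof (rule integral_dominated_convergence[where w="\<lambda>x. norm (indicator A x *\<^sub>R f x)"])
    show "(\<lambda>x. indicator A x *\<^sub>R (f x * g K x)) \<in> borel_measurable M" for K
      using set_integrable_mult_bounded[OF f g_meas g_le] unfolding set_integrable_def
      by (rule borel_measurable_integrable)
    show "integrable M (\<lambda>x. norm (indicator A x *\<^sub>R f x))"
      using f unfolding set_integrable_def by (rule integrable_norm)
    show "AE x in M. norm (indicator A x *\<^sub>R (f x * g K x)) \<le> norm (indicator A x *\<^sub>R f x)" for K
      using g_le[of K] by (auto simp: norm_mult indicator_def intro!: mult_left_le)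
    show "AE x in M. (\<lambda>K. indicator A x *\<^sub>R (f x * g K x)) \<longlonglongrightarrow> 0"
      using g_lim
    proof eventually_elim
      case (elim x)
      then show ?case
        by (cases "x \<in> A") (auto intro: tendsto_mult_right_zero)
    qed
  qed simp
  then show ?thesis by (simp add: set_lebesgue_integral_def)
qed

lemma exp_i_mult_ne_1:
  fixes x :: real
  assumes "x \<in> {-pi..pi}" "x \<noteq> 0" "s = 1 \<or> s = -1"
  shows "exp (- (\<i> * of_int s * complex_of_real x)) \<noteq> 1"
proof
  assume "exp (- (\<i> * of_int s * complex_of_real x)) = 1"
  then obtain n :: int where n: "- (real_of_int s * x) = of_int (2 * n) * pi"
    by (auto simp: exp_eq_1)
  have "\<bar>real_of_int s * x\<bar> \<le> pi"
    using assms by (auto simp: abs_mult)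
  then have "\<bar>of_int (2 * n) * pi\<bar> \<le> 1 * pi"
    by (metis n abs_minus_cancel mult_1)
  then have "\<bar>real_of_int (2 * n)\<bar> \<le> 1"
    by (simp add: abs_mult)
  then have "n = 0" by linarith
  with n assms(2,3) show False by auto
qed

lemma dyadic_average_fourier_coeff:
  fixes f :: "real \<Rightarrow> complex" and s :: int
  assumes f: "set_integrable lborel {-pi..pi} f"
  shows "dyadic_average (\<lambda>i. fourier_coeff f (s * int i)) K
    = complex_of_real (1 / (2 * pi)) * (LINT x:{-pi..pi}|lborel.
        f x * dyadic_average (\<lambda>i. exp (- (\<i> * of_int s * complex_of_real x)) ^ i) K)"
proof -
  define E where "E j x = f x * exp (- (\<i> * of_int (s * int (2 ^ K + j)) * complex_of_real x))" for j x
  have "exp (- (\<i> * of_int s * complex_of_real x)) ^ i = exp (- (\<i> * of_int (s * int i) * complex_of_real x))"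
    for x i
  proof -
    have "- (\<i> * of_int (s * int i) * complex_of_real x) = of_nat i * (- (\<i> * of_int s * complex_of_real x))"
      by (simp add: algebra_simps)
    then show ?thesis by (simp only: exp_of_nat_mult)
  qed
  then have "(LINT x:{-pi..pi}|lborel.
        f x * dyadic_average (\<lambda>i. exp (- (\<i> * of_int s * complex_of_real x)) ^ i) K)
      = (LINT x:{-pi..pi}|lborel. (\<Sum>j<(2::nat) ^ K. E j x) / of_nat (2 ^ K))"
    unfolding dyadic_average_def E_def by (simp add: sum_distrib_left)
  also have "\<dots> = (\<Sum>j<(2::nat) ^ K. LINT x:{-pi..pi}|lborel. E j x) / of_nat (2 ^ K)"
    unfolding E_def by (subst set_integral_divide_zero, subst set_integral_sum)
      (auto intro!: set_integrable_mult_bounded[OF f])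
  finally show ?thesis
    unfolding fourier_coeff_def dyadic_average_def E_def
    by (simp add: sum_divide_distrib[symmetric] field_simps)
qed

text \<open>A weak form of the Riemann--Lebesgue lemma: averaging the coefficients over a dyadic
  block amounts to integrating \<open>f\<close> against a kernel bounded by \<open>1\<close> that tends to \<open>0\<close> off \<open>x = 0\<close>.\<close>
lemma fourier_coeff_dyadic_average_tendsto_zero:
  fixes f :: "real \<Rightarrow> complex" and s :: int
  assumes f: "set_integrable lborel {-pi..pi} f" and s: "s = 1 \<or> s = -1"
  shows "dyadic_average (\<lambda>i. fourier_coeff f (s * int i)) \<longlonglongrightarrow> 0"
proof -
  define z where "z x = exp (- (\<i> * of_int s * complex_of_real x))" for x
  define ker where "ker K x = dyadic_average (\<lambda>i. z x ^ i) K" for K x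
  have ker_le: "norm (ker K x) \<le> 1" for K x
    unfolding ker_def by (rule norm_dyadic_average_le) (simp add: z_def norm_power)
  have ker_meas: "ker K \<in> borel_measurable lborel" for K
    unfolding ker_def dyadic_average_def z_def by measurable
  have "(\<lambda>K. LINT x:{-pi..pi}|lborel. f x * ker K x) \<longlonglongrightarrow> 0"
    using f ker_meas ker_le
  proof (rule set_integral_mult_bounded_tendsto_zero)
    show "AE x in lborel. x \<in> {-pi..pi} \<longrightarrow> (\<lambda>K. ker K x) \<longlonglongrightarrow> 0"
      using AE_lborel_singleton[of 0]
    proof eventually_elim
      case (elim x)
      show ?case
      proof
        assume "x \<in> {-pi..pi}"
        then have "z x \<noteq> 1"
          unfolding z_def using elim s by (intro exp_i_mult_ne_1) auto
        then show "(\<lambda>K. ker K x) \<longlonglongrightarrow> 0"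
          unfolding ker_def by (intro dyadic_average_power_tendsto_zero) (simp_all add: z_def)
      qed
    qed
  qed
  then have "(\<lambda>K. complex_of_real (1 / (2 * pi)) * (LINT x:{-pi..pi}|lborel. f x * ker K x))
      \<longlonglongrightarrow> 0"
    by (rule tendsto_mult_right_zero)
  moreover have "dyadic_average (\<lambda>i. fourier_coeff f (s * int i))
      = (\<lambda>K. complex_of_real (1 / (2 * pi)) * (LINT x:{-pi..pi}|lborel. f x * ker K x))"
    by (rule ext) (simp add: dyadic_average_fourier_coeff[OF f] ker_def z_def)
  ultimately show ?thesis by (simp only:)
qed

section \<open>Dyadic telescoping\<close>

lemma norm_diff_le_sum_norm_diff:
  fixes c :: "nat \<Rightarrow> 'a::real_normed_vector"
  assumes "m \<le> n"
  shows "norm (c m - c n) \<le> (\<Sum>i=m..<n. norm (c i - c (Suc i)))"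
proof -
  have "c m - c n = - (\<Sum>i=m..<n. c (Suc i) - c i)"
    using assms by (simp add: sum_Suc_diff')
  also have "\<dots> = (\<Sum>i=m..<n. c i - c (Suc i))"
    by (simp add: sum_negf[symmetric])
  finally have "c m - c n = (\<Sum>i=m..<n. c i - c (Suc i))" .
  then show ?thesis by (metis norm_sum)
qed

lemma sum_dyadic_blocks:
  fixes g :: "nat \<Rightarrow> 'a::comm_monoid_add"
  assumes "N \<le> K"
  shows "(\<Sum>i=2^N..<2^K. g i) = (\<Sum>k=N..<K. \<Sum>i=2^k..<2^Suc k. g i)"
  using assms
proof (induction K rule: dec_induct)
  case (step K)
  have "(2::nat) ^ N \<le> 2 ^ K" using step.hyps(1) by (simp add: power_increasing)
  then have "(\<Sum>i=2^N..<2^Suc K. g i) = (\<Sum>i=2^N..<2^K. g i) + (\<Sum>i=2^K..<2^Suc K. g i)"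
    by (simp add: sum.atLeastLessThan_concat)
  then show ?case
    using step.IH step.hyps(1) by (simp add: sum.atLeastLessThan_Suc)
qed simp

text \<open>Compare \<open>c (2^N)\<close> with each term of the block \<open>[2^K, 2^(K+1))\<close> by telescoping, then average.\<close>
lemma norm_le_dyadic_variation_add_average:
  fixes c :: "nat \<Rightarrow> 'a::real_normed_field"
  assumes NK: "N \<le> K"
  shows "norm (c (2^N)) \<le> (\<Sum>k=N..K. \<Sum>i=2^k..<2^Suc k. norm (c i - c (Suc i)))
          + norm (dyadic_average c K)"
proof -
  define M :: nat where "M = 2 ^ K"
  define V where "V = (\<Sum>k=N..K. \<Sum>i=2^k..<2^Suc k. norm (c i - c (Suc i)))"
  have M0: "M > 0" by (simp add: M_def)
  have NM: "(2::nat) ^ N \<le> M" unfolding M_def using NK by (simp add: power_increasing)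
  have split: "c (2^N) = (\<Sum>j<M. c (2^N) - c (M + j)) / of_nat M + dyadic_average c K"
  proof -
    have "(\<Sum>j<M. c (2^N) - c (M + j)) + (\<Sum>j<M. c (M + j)) = of_nat M * c (2^N)"
      by (simp add: sum_subtractf)
    then show ?thesis
      using M0 by (simp add: dyadic_average_def M_def[symmetric] add_divide_distrib[symmetric])
  qed
  have term_le: "norm (c (2^N) - c (M + j)) \<le> V" if "j < M" for j
  proof -
    have "norm (c (2^N) - c (M + j)) \<le> (\<Sum>i=2^N..<M + j. norm (c i - c (Suc i)))"
      using NM by (intro norm_diff_le_sum_norm_diff) simp
    also have "\<dots> \<le> (\<Sum>i=2^N..<2^Suc K. norm (c i - c (Suc i)))"
      using that by (intro sum_mono2) (auto simp: M_def)
    also have "\<dots> = V"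
      unfolding V_def atLeastLessThanSuc_atLeastAtMost[symmetric] using NK by (intro sum_dyadic_blocks) simp
    finally show ?thesis .
  qed
  have "norm ((\<Sum>j<M. c (2^N) - c (M + j)) / of_nat M) \<le> (\<Sum>j<M. norm (c (2^N) - c (M + j))) / of_nat M"
    by (simp add: norm_divide divide_right_mono norm_sum)
  also have "\<dots> \<le> (\<Sum>j<M. V) / of_nat M"
    by (intro divide_right_mono sum_mono term_le) auto
  also have "\<dots> = V" using M0 by simp
  finally show ?thesis
    unfolding V_def[symmetric] by (subst split) (rule order_trans[OF norm_triangle_ineq], simp)
qed

section \<open>Power inequalities\<close>

lemma powr_add_le_two_powr:
  fixes x y p :: real
  assumes x: "0 \<le> x" and y: "0 \<le> y" and p: "1 \<le> p"
  shows "(x + y) powr p \<le> 2 powr (p - 1) * (x powr p + y powr p)"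
proof -
  have one_le: "1 \<le> 2 powr (p - 1)" using p by (simp add: ge_one_powr_ge_zero)
  consider "x = 0" | "y = 0" | "0 < x" "0 < y" using x y by linarith
  then show ?thesis
  proof cases
    case 1
    then show ?thesis using one_le p y by (simp add: mult_le_cancel_right1)
  next
    case 2
    then show ?thesis using one_le p x by (simp add: mult_le_cancel_right1)
  next
    case 3
    define m where "m = (x + y) / 2"
    have "((1 - 1/2) *\<^sub>R x + (1/2) *\<^sub>R y) powr p \<le> (1 - 1/2) * x powr p + (1/2) * y powr p"
      by (rule convex_onD[OF powr_convex[OF p]]) (use 3 in auto)
    then have "m powr p \<le> (x powr p + y powr p) / 2"
      by (simp add: m_def add_divide_distrib)
    moreover have "(x + y) powr p = 2 powr p * m powr p"
    proof -
      have "x + y = 2 * m" "0 \<le> m" using 3 by (simp_all add: m_def)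
      then show ?thesis by (simp add: powr_mult)
    qed
    ultimately show ?thesis
      by (simp add: powr_diff)
  qed
qed

lemma powr_sum_le_weighted:
  fixes u :: "nat \<Rightarrow> real" and p :: real
  assumes u: "\<And>j. 0 \<le> u j" and p: "1 \<le> p"
  shows "(\<Sum>j<M. u j) powr p \<le> (\<Sum>j<M. (2 powr (p - 1)) ^ (j + 1) * u j powr p)"
  using u
proof (induction M arbitrary: u)
  case 0
  then show ?case using p by simp
next
  case (Suc M)
  define r where "r = 2 powr (p - 1)"
  have r0: "0 \<le> r" by (simp add: r_def)
  have "(\<Sum>j<Suc M. u j) = u 0 + (\<Sum>j<M. u (Suc j))"
    by (rule sum.lessThan_Suc_shift)
  then have "(\<Sum>j<Suc M. u j) powr p \<le> r * (u 0 powr p + (\<Sum>j<M. u (Suc j)) powr p)"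
    unfolding r_def using Suc.prems p by (simp add: powr_add_le_two_powr sum_nonneg)
  also have "\<dots> \<le> r * (u 0 powr p + (\<Sum>j<M. r ^ (j + 1) * u (Suc j) powr p))"
    using Suc.IH[of "\<lambda>j. u (Suc j)"] Suc.prems r0 unfolding r_def
    by (intro mult_left_mono add_left_mono) auto
  also have "\<dots> = (\<Sum>j<Suc M. r ^ (j + 1) * u j powr p)"
    unfolding sum.lessThan_Suc_shift by (simp add: sum_distrib_left algebra_simps)
  finally show ?case unfolding r_def .
qed

section \<open>The blocks \<open>\<Theta>\<^sub>k\<close> of a truncated coefficient sequence\<close>

lemma delta_abs_nonneg: "0 \<le> delta_abs c m"
  by (simp add: delta_abs_def)

lemma Theta_nonneg: "0 \<le> Theta c k"
  unfolding Theta_def by (rule sum_nonneg) (simp add: delta_abs_nonneg)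

lemma floor_two_powr_minus_one:
  "\<lfloor>(2::real) powr (real k - 1)\<rfloor> = (if k = 0 then 0 else 2 ^ (k - 1))"
proof (cases k)
  case (Suc j)
  then have "(2::real) powr (real k - 1) = 2 ^ j"
    by (simp add: powr_realpow)
  then show ?thesis using Suc by simp
qed simp

lemma Theta_eq_sum:
  "Theta c k = (\<Sum>m | (if k = 0 then 0 else 2 ^ (k - 1)) \<le> \<bar>m\<bar> \<and> \<bar>m\<bar> < 2 ^ k. delta_abs c m)"
  unfolding Theta_def floor_two_powr_minus_one by simp

lemma finite_abs_between: "finite {m::int. L \<le> \<bar>m\<bar> \<and> \<bar>m\<bar> < B}"
  by (rule finite_subset[of _ "{-B..B}"]) auto

lemma delta_abs_coeff_trunc:
  fixes a :: "int \<Rightarrow> complex" and P :: int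
  assumes "1 \<le> P"
  shows "delta_abs (coeff_trunc P a) m =
    (if \<bar>m\<bar> < P then delta_abs a m else if \<bar>m\<bar> = P then cmod (a m) else 0)"
  using assms by (auto simp: delta_abs_def coeff_trunc_def)

lemma Theta_Suc_ge_dyadic_variation:
  "(\<Sum>i=2^k..<2^Suc k. cmod (c (int i) - c (int (Suc i))))
   + (\<Sum>i=2^k..<2^Suc k. cmod (c (- int i) - c (- int (Suc i)))) \<le> Theta c (Suc k)"
proof -
  define S where "S = {m::int. 2 ^ k \<le> \<bar>m\<bar> \<and> \<bar>m\<bar> < 2 ^ Suc k}"
  define I where "I = {(2::nat) ^ k..<2 ^ Suc k}"
  have I_pos: "0 < i" if "i \<in> I" for i
    using that one_le_power[of "2::nat" k] by (auto simp: I_def)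
  have I_S: "int i \<in> S" "- int i \<in> S" if "i \<in> I" for i
  proof -
    have "2 ^ k \<le> i" "i < 2 ^ Suc k" using that by (auto simp: I_def)
    then have "int (2 ^ k) \<le> int i" "int i < int (2 ^ Suc k)" by linarith+
    then show "int i \<in> S" "- int i \<in> S" by (auto simp: S_def)
  qed
  have disjoint: "int ` I \<inter> (\<lambda>i. - int i) ` I = {}" using I_pos by force
  have "(\<Sum>m\<in>int ` I. delta_abs c m) + (\<Sum>m\<in>(\<lambda>i. - int i) ` I. delta_abs c m)
      = (\<Sum>m\<in>int ` I \<union> (\<lambda>i. - int i) ` I. delta_abs c m)"
    by (rule sum.union_disjoint[symmetric]) (auto simp: I_def disjoint)
  also have "\<dots> \<le> (\<Sum>m\<in>S. delta_abs c m)"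
    using I_S by (intro sum_mono2) (auto simp: S_def finite_abs_between delta_abs_nonneg)
  also have "\<dots> = Theta c (Suc k)"
    unfolding Theta_eq_sum S_def by simp
  also have "(\<Sum>m\<in>int ` I. delta_abs c m) = (\<Sum>i\<in>I. cmod (c (int i) - c (int (Suc i))))"
    using I_pos by (subst sum.reindex) (auto simp: inj_on_def delta_abs_def add.commute intro!: sum.cong)
  also have "(\<Sum>m\<in>(\<lambda>i. - int i) ` I. delta_abs c m) = (\<Sum>i\<in>I. cmod (c (- int i) - c (- int (Suc i))))"
    using I_pos by (subst sum.reindex) (auto simp: inj_on_def delta_abs_def intro!: sum.cong arg_cong[where f="\<lambda>m. cmod (_ - c m)"])
  finally show ?thesis unfolding I_def .
qed

lemma Theta_coeff_trunc_below:
  fixes a :: "int \<Rightarrow> complex"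
  assumes "k \<le> N"
  shows "Theta (coeff_trunc (2 ^ N) a) k = Theta a k"
proof -
  have kN: "(2::int) ^ k \<le> 2 ^ N" using assms by (simp add: power_increasing)
  have "\<bar>x\<bar> < 2 ^ N" if "\<bar>x\<bar> < 2 ^ k" for x :: int
    using that kN by linarith
  then show ?thesis
    unfolding Theta_eq_sum by (intro sum.cong refl) (simp add: delta_abs_coeff_trunc)
qed

lemma Theta_coeff_trunc_Suc:
  fixes a :: "int \<Rightarrow> complex"
  shows "Theta (coeff_trunc (2 ^ N) a) (Suc N) = cmod (a (2 ^ N)) + cmod (a (- (2 ^ N)))"
proof -
  define S where "S = {m::int. 2 ^ N \<le> \<bar>m\<bar> \<and> \<bar>m\<bar> < 2 ^ Suc N}"
  define T where "T = {(2::int) ^ N, - (2 ^ N)}"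
  have "Theta (coeff_trunc (2 ^ N) a) (Suc N) = (\<Sum>m\<in>S. if m \<in> T then cmod (a m) else 0)"
    unfolding Theta_eq_sum S_def T_def
    by (intro sum.cong refl) (auto simp: delta_abs_coeff_trunc abs_if)
  also have "\<dots> = (\<Sum>m\<in>T. cmod (a m))"
    by (subst sum.inter_restrict[symmetric]) (auto simp: S_def T_def finite_abs_between intro: arg_cong2[where f=sum])
  also have "\<dots> = cmod (a (2 ^ N)) + cmod (a (- (2 ^ N)))"
    unfolding T_def by simp
  finally show ?thesis .
qed

lemma Theta_coeff_trunc_above:
  fixes a :: "int \<Rightarrow> complex"
  assumes "Suc (Suc N) \<le> k"
  shows "Theta (coeff_trunc (2 ^ N) a) k = 0"
proof -
  obtain j where k: "k = Suc j" and "N < j"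
    using assms by (cases k) auto
  then have "(2::int) ^ N < 2 ^ j"
    by (intro power_strict_increasing) auto
  then have large: "2 ^ N < \<bar>x\<bar>" if "2 ^ j \<le> \<bar>x\<bar>" for x :: int
    using that by linarith
  show ?thesis
    unfolding Theta_eq_sum k
  proof (intro sum.neutral ballI)
    fix x :: int
    assume "x \<in> {m. (if Suc j = 0 then 0 else 2 ^ (Suc j - 1)) \<le> \<bar>m\<bar> \<and> \<bar>m\<bar> < 2 ^ Suc j}"
    then have "2 ^ N < \<bar>x\<bar>" by (simp add: large)
    then show "delta_abs (coeff_trunc (2 ^ N) a) x = 0" by (simp add: delta_abs_coeff_trunc)
  qed
qed

section \<open>The weighted series defining \<open>I\<^sub>p\<close>\<close>

definition Theta_weighted :: "real \<Rightarrow> (int \<Rightarrow> complex) \<Rightarrow> nat \<Rightarrow> real" where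
  "Theta_weighted p c k = (2 powr (p - 1)) ^ k * Theta c k powr p"

lemma Theta_weighted_nonneg: "0 \<le> Theta_weighted p c k"
  by (simp add: Theta_weighted_def)

lemma powr_conj_exp_weight:
  fixes p x :: real
  assumes p: "1 < p" and x: "0 \<le> x"
  shows "(2 powr (real k / conj_exp p) * x) powr p = (2 powr (p - 1)) ^ k * x powr p"
proof -
  have "real k / conj_exp p * p = (p - 1) * real k"
    using p unfolding conj_exp_def by (simp add: field_simps)
  then have "(2 powr (real k / conj_exp p)) powr p = (2 powr (p - 1)) ^ k"
    by (simp add: powr_powr powr_realpow[symmetric] mult.commute)
  then show ?thesis
    using x by (simp add: powr_mult)
qed

lemma Ip_seq_eq:
  assumes "1 < p"
  shows "Ip_seq p c = (if summable (Theta_weighted p c)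
                       then ereal (suminf (Theta_weighted p c) powr (1 / p)) else \<infinity>)"
proof -
  have "(\<lambda>k. (2 powr (real k / conj_exp p) * Theta c k) powr p) = Theta_weighted p c"
    using assms by (auto simp: Theta_weighted_def powr_conj_exp_weight Theta_nonneg)
  then show ?thesis unfolding Ip_seq_def Let_def by simp
qed

lemma edge_coeffs_le_Theta_sum:
  fixes a :: "int \<Rightarrow> complex"
  assumes NK: "N \<le> K"
  shows "cmod (a (2 ^ N)) + cmod (a (- (2 ^ N))) \<le> (\<Sum>k=N..K. Theta a (Suc k))
         + cmod (dyadic_average (\<lambda>i. a (int i)) K) + cmod (dyadic_average (\<lambda>i. a (- int i)) K)"
proof -
  define c1 where "c1 = (\<lambda>i. a (int i))"
  define c2 where "c2 = (\<lambda>i. a (- int i))"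
  have "(\<Sum>k=N..K. \<Sum>i=2^k..<2^Suc k. cmod (c1 i - c1 (Suc i)))
      + (\<Sum>k=N..K. \<Sum>i=2^k..<2^Suc k. cmod (c2 i - c2 (Suc i)))
      = (\<Sum>k=N..K. (\<Sum>i=2^k..<2^Suc k. cmod (c1 i - c1 (Suc i)))
                   + (\<Sum>i=2^k..<2^Suc k. cmod (c2 i - c2 (Suc i))))"
    by (simp only: sum.distrib)
  also have "\<dots> \<le> (\<Sum>k=N..K. Theta a (Suc k))"
    unfolding c1_def c2_def by (intro sum_mono Theta_Suc_ge_dyadic_variation)
  moreover have "cmod (a (2 ^ N)) \<le> (\<Sum>k=N..K. \<Sum>i=2^k..<2^Suc k. cmod (c1 i - c1 (Suc i)))
      + cmod (dyadic_average (\<lambda>i. a (int i)) K)"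
    using norm_le_dyadic_variation_add_average[OF NK, of c1] by (simp add: c1_def)
  moreover have "cmod (a (- (2 ^ N))) \<le> (\<Sum>k=N..K. \<Sum>i=2^k..<2^Suc k. cmod (c2 i - c2 (Suc i)))
      + cmod (dyadic_average (\<lambda>i. a (- int i)) K)"
    using norm_le_dyadic_variation_add_average[OF NK, of c2] by (simp add: c2_def)
  ultimately show ?thesis by linarith
qed

lemma Theta_weighted_partial_sum_le:
  fixes c :: "int \<Rightarrow> complex"
  assumes p: "1 < p" and summable: "summable (Theta_weighted p c)" and NK: "N \<le> K"
  shows "(2 powr (p - 1)) ^ Suc N * (\<Sum>k=N..K. Theta c (Suc k)) powr p
         \<le> 2 powr (p - 1) * (\<Sum>j. Theta_weighted p c (j + Suc N))"
proof -
  define r :: real where "r = 2 powr (p - 1)"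
  have r0: "0 \<le> r" by (simp add: r_def)
  have "(\<Sum>k=N..K. Theta c (Suc k)) = (\<Sum>j<Suc (K - N). Theta c (Suc (N + j)))"
    using NK by (subst sum.atLeastAtMost_shift_0) (auto simp: atLeast0AtMost lessThan_Suc_atMost)
  moreover have "(\<Sum>j<Suc (K - N). Theta c (Suc (N + j))) powr p
      \<le> (\<Sum>j<Suc (K - N). r ^ (j + 1) * Theta c (Suc (N + j)) powr p)"
    unfolding r_def using p by (intro powr_sum_le_weighted Theta_nonneg) simp
  ultimately have "(\<Sum>k=N..K. Theta c (Suc k)) powr p
      \<le> (\<Sum>j<Suc (K - N). r ^ (j + 1) * Theta c (Suc (N + j)) powr p)"
    by simp
  then have "r ^ Suc N * (\<Sum>k=N..K. Theta c (Suc k)) powr p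
      \<le> r ^ Suc N * (\<Sum>j<Suc (K - N). r ^ (j + 1) * Theta c (Suc (N + j)) powr p)"
    using r0 by (intro mult_left_mono) auto
  also have "\<dots> = r * (\<Sum>j<Suc (K - N). Theta_weighted p c (j + Suc N))"
    unfolding Theta_weighted_def r_def sum_distrib_left
    by (intro sum.cong refl) (simp add: power_add algebra_simps)
  also have "\<dots> \<le> r * (\<Sum>j. Theta_weighted p c (j + Suc N))"
    using summable r0
    by (intro mult_left_mono sum_le_suminf summable_ignore_initial_segment) (simp_all add: Theta_weighted_nonneg)
  finally show ?thesis unfolding r_def .
qed


text \<open>The dyadic averages vanish as \<open>K \<rightarrow> \<infinity>\<close>, so only the variation survives.\<close>
lemma edge_coeffs_le_bound_Theta_sums:
  fixes f :: "real \<Rightarrow> complex"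
  assumes f: "set_integrable lborel {-pi..pi} f"
    and bound: "\<And>K. N \<le> K \<Longrightarrow> (\<Sum>k=N..K. Theta (fourier_coeff f) (Suc k)) \<le> B"
  shows "cmod (fourier_coeff f (2 ^ N)) + cmod (fourier_coeff f (- (2 ^ N))) \<le> B"
proof (rule LIMSEQ_le_const)
  define a where "a = fourier_coeff f"
  define e where "e K = cmod (dyadic_average (\<lambda>i. a (int i)) K) + cmod (dyadic_average (\<lambda>i. a (- int i)) K)" for K
  have "dyadic_average (\<lambda>i. a (s * int i)) \<longlonglongrightarrow> 0" if "s = 1 \<or> s = -1" for s
    unfolding a_def using f that by (rule fourier_coeff_dyadic_average_tendsto_zero)
  from this[of 1] this[of "-1"] have "e \<longlonglongrightarrow> 0 + 0"
    unfolding e_def[abs_def] by (intro tendsto_add tendsto_norm_zero) simp_all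
  then show "(\<lambda>K. B + e K) \<longlonglongrightarrow> B"
    using tendsto_add[OF tendsto_const] by fastforce
  show "\<exists>M. \<forall>K\<ge>M. cmod (fourier_coeff f (2 ^ N)) + cmod (fourier_coeff f (- (2 ^ N))) \<le> B + e K"
  proof (intro exI[of _ N] allI impI)
    fix K assume NK: "N \<le> K"
    have "cmod (a (2 ^ N)) + cmod (a (- (2 ^ N))) \<le> (\<Sum>k=N..K. Theta a (Suc k)) + e K"
      using edge_coeffs_le_Theta_sum[OF NK, of a] by (simp add: e_def)
    also have "\<dots> \<le> B + e K"
      using bound[OF NK] by (simp add: a_def)
    finally show "cmod (fourier_coeff f (2 ^ N)) + cmod (fourier_coeff f (- (2 ^ N))) \<le> B + e K"
      by (simp add: a_def)
  qed
qed

lemma edge_coeffs_powr_le: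
  fixes f :: "real \<Rightarrow> complex"
  assumes f: "set_integrable lborel {-pi..pi} f" and p: "1 < p"
    and summable: "summable (Theta_weighted p (fourier_coeff f))"
  shows "(2 powr (p - 1)) ^ Suc N * (cmod (fourier_coeff f (2 ^ N)) + cmod (fourier_coeff f (- (2 ^ N)))) powr p
         \<le> 2 powr (p - 1) * (\<Sum>j. Theta_weighted p (fourier_coeff f) (j + Suc N))"
proof -
  define a where "a = fourier_coeff f"
  define \<alpha> where "\<alpha> = cmod (a (2 ^ N)) + cmod (a (- (2 ^ N)))"
  define R :: real where "R = (2 powr (p - 1)) ^ Suc N"
  define T where "T = 2 powr (p - 1) * (\<Sum>j. Theta_weighted p a (j + Suc N))"
  define X where "X = T / R"
  have R_pos: "0 < R" by (simp add: R_def)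
  have X_nonneg: "0 \<le> X"
    using summable R_pos unfolding X_def T_def a_def
    by (intro divide_nonneg_pos mult_nonneg_nonneg suminf_nonneg summable_ignore_initial_segment)
      (simp_all add: Theta_weighted_nonneg)
  have "(\<Sum>k=N..K. Theta a (Suc k)) \<le> X powr (1 / p)" if "N \<le> K" for K
  proof -
    define U where "U = (\<Sum>k=N..K. Theta a (Suc k))"
    have U_nonneg: "0 \<le> U" unfolding U_def by (simp add: sum_nonneg Theta_nonneg)
    have "R * U powr p \<le> R * X"
      using Theta_weighted_partial_sum_le[OF p summable[folded a_def] that] R_pos
      unfolding R_def[symmetric] U_def[symmetric] T_def[symmetric] by (simp add: X_def)
    then have "U powr p \<le> X" using R_pos by simp
    then have "(U powr p) powr (1 / p) \<le> X powr (1 / p)"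
      using p by (intro powr_mono2) auto
    then show ?thesis using p U_nonneg by (simp add: U_def[symmetric] powr_powr)
  qed
  then have "\<alpha> \<le> X powr (1 / p)"
    unfolding \<alpha>_def a_def by (rule edge_coeffs_le_bound_Theta_sums[OF f])
  then have "\<alpha> powr p \<le> (X powr (1 / p)) powr p"
    using p by (intro powr_mono2) (auto simp: \<alpha>_def)
  also have "\<dots> = X"
    using p X_nonneg by (simp add: powr_powr)
  finally have "R * \<alpha> powr p \<le> R * X"
    using R_pos by (rule mult_left_mono[OF _ less_imp_le])
  also have "R * X = T"
    using R_pos by (simp add: X_def)
  finally show ?thesis
    by (simp only: \<alpha>_def a_def R_def T_def)
qed

lemma Theta_weighted_coeff_trunc:
  fixes a :: "int \<Rightarrow> complex"
  shows "Theta_weighted p (coeff_trunc (2 ^ N) a) k =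
    (if k \<le> N then Theta_weighted p a k
     else if k = Suc N then (2 powr (p - 1)) ^ Suc N * (cmod (a (2 ^ N)) + cmod (a (- (2 ^ N)))) powr p
     else 0)"
proof -
  consider "k \<le> N" | "k = Suc N" | "Suc (Suc N) \<le> k" by linarith
  then show ?thesis
    by cases (simp_all add: Theta_weighted_def Theta_coeff_trunc_below Theta_coeff_trunc_Suc
        Theta_coeff_trunc_above)
qed

lemma suminf_Theta_weighted_coeff_trunc_le:
  fixes f :: "real \<Rightarrow> complex" and N :: nat
  assumes f: "set_integrable lborel {-pi..pi} f" and p: "1 < p"
    and summable: "summable (Theta_weighted p (fourier_coeff f))"
  defines "w \<equiv> Theta_weighted p (fourier_coeff f)"
    and "w\<^sub>N \<equiv> Theta_weighted p (coeff_trunc (2 ^ N) (fourier_coeff f))"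
  shows "summable w\<^sub>N" and "suminf w\<^sub>N \<le> 2 powr (p - 1) * suminf w"
proof -
  define r :: real where "r = 2 powr (p - 1)"
  define edge where "edge = r ^ Suc N * (cmod (fourier_coeff f (2 ^ N)) + cmod (fourier_coeff f (- (2 ^ N)))) powr p"
  have r_ge_1: "1 \<le> r" using p by (simp add: r_def ge_one_powr_ge_zero)
  have w\<^sub>N: "w\<^sub>N k = (if k \<le> N then w k else if k = Suc N then edge else 0)" for k
    unfolding w\<^sub>N_def w_def edge_def r_def by (rule Theta_weighted_coeff_trunc)
  have sums: "w\<^sub>N sums ((\<Sum>k<Suc N. w k) + edge)"
  proof -
    have "w\<^sub>N sums (\<Sum>k<Suc (Suc N). w\<^sub>N k)"
      by (rule sums_finite) (auto simp: w\<^sub>N)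
    moreover have "(\<Sum>k<Suc (Suc N). w\<^sub>N k) = (\<Sum>k<Suc N. w k) + edge"
      by (simp add: w\<^sub>N)
    ultimately show ?thesis by simp
  qed
  then show "summable w\<^sub>N" by (rule sums_summable)
  have "0 \<le> (\<Sum>k<Suc N. w k)"
    by (simp add: sum_nonneg w_def Theta_weighted_nonneg)
  then have head: "(\<Sum>k<Suc N. w k) \<le> r * (\<Sum>k<Suc N. w k)"
    using mult_right_mono[OF r_ge_1] by simp
  have tail: "edge \<le> r * (\<Sum>j. w (j + Suc N))"
    unfolding edge_def r_def w_def by (rule edge_coeffs_powr_le[OF f p summable])
  have "suminf w\<^sub>N = (\<Sum>k<Suc N. w k) + edge"
    using sums by (rule sums_unique[symmetric])
  also have "\<dots> \<le> r * ((\<Sum>j. w (j + Suc N)) + (\<Sum>k<Suc N. w k))"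
    using head tail by (simp add: distrib_left)
  also have "(\<Sum>j. w (j + Suc N)) + (\<Sum>k<Suc N. w k) = suminf w"
    using summable unfolding w_def by (rule suminf_split_initial_segment[symmetric])
  finally show "suminf w\<^sub>N \<le> 2 powr (p - 1) * suminf w" unfolding r_def .
qed

theorem mainTheorem7:
  fixes f :: "real \<Rightarrow> complex" and p :: real and N :: nat
  assumes "set_integrable lborel {-pi..pi} f"
    and "1 < p"
  shows "Ip p (S_N N f) \<le> ereal (2 powr (1 / conj_exp p)) * Ip p f"
proof (cases "summable (Theta_weighted p (fourier_coeff f))")
  case False
  then show ?thesis
    using assms(2) by (simp add: Ip_def Ip_seq_eq)
next
  case True
  define w where "w = Theta_weighted p (fourier_coeff f)"
  define w\<^sub>N where "w\<^sub>N = Theta_weighted p (coeff_trunc (2 ^ N) (fourier_coeff f))"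
  note trunc = suminf_Theta_weighted_coeff_trunc_le[OF assms True, of N, folded w_def w\<^sub>N_def]
  have "suminf w\<^sub>N powr (1 / p) \<le> (2 powr (p - 1) * suminf w) powr (1 / p)"
    using trunc assms(2) True by (intro powr_mono2) (auto simp: w\<^sub>N_def suminf_nonneg Theta_weighted_nonneg
        intro!: suminf_nonneg)
  also have "\<dots> = 2 powr (1 / conj_exp p) * suminf w powr (1 / p)"
    using assms(2) True
    by (simp add: powr_mult powr_powr conj_exp_def w_def suminf_nonneg Theta_weighted_nonneg)
  finally show ?thesis
    using trunc assms(2) True
    by (simp add: Ip_def Ip_seq_eq fourier_coeff_S_N w_def[symmetric] w\<^sub>N_def[symmetric])
qed

end
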